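(* For any cardinals $\lambda\ge\kappa\ge\omega$ and any natural number $d$, we have $\chi_{\rm CF}(\lambda,\kappa,d)\le\omega$, and in fact $[\lambda,\kappa,d]\Rightarrow\omega$.
   Context: For a function $f$ and set $A$, $I_f(A)=\{\xi\in\operatorname{ran}(f):|A\cap f^{-1}\{\xi\}|=1\}$. A $(\lambda,\kappa,\mu)$-system is a family $\mathcal A$ with $|\mathcal A|=\lambda$, $|A|=\kappa$ for all $A\in\mathcal A$, and $|A\cap A'|<\mu$ for distinct $A,A'\in\mathcal A$. A conflict free coloring of $\mathcal A$ with $\rho$ colors is $f:\bigcup\mathcal A\to\rho$ with $I_f(A)\neq\emptyset$ for all $A\in\mathcal A$; $\chi_{\rm CF}(\mathcal A)$ is the least such $\rho$, and $\chi_{\rm CF}(\lambda,\kappa,\mu)$ is its supremum over all $(\lambda,\kappa,\mu)$-systems. For $\lambda\ge\kappa\ge\rho\ge\omega$ and $\mu\le\kappa$, $[\lambda,\kappa,\mu]\Rightarrow\rho$ means: every $(\lambda,\kappa,\mu)$-system $\mathcal A$ admits $f:\bigcup\mathcal A\to\rho$ with $|\rho\setminus I_f(A)|<\rho$ for all $A\in\mathcal A$. *)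

theory Defs
  imports "HOL-Library.Equipollence"
begin

definition I_f :: "('a \<Rightarrow> 'b) \<Rightarrow> 'a set \<Rightarrow> 'a set \<Rightarrow> 'b set" where
  "I_f f D A = {\<xi> \<in> f ` D. card (A \<inter> f -` {\<xi>}) = 1}"

text \<open>A (lambda,kappa,d)-system with d a natural number; the cardinals lambda and
  kappa are given as the cardinalities of the sets L and K.\<close>
definition is_system :: "'a set set \<Rightarrow> 'l set \<Rightarrow> 'k set \<Rightarrow> nat \<Rightarrow> bool" where
  "is_system \<A> L K d \<longleftrightarrow>
     \<A> \<approx> L \<and> (\<forall>A\<in>\<A>. A \<approx> K) \<and>
     (\<forall>A\<in>\<A>. \<forall>A'\<in>\<A>. A \<noteq> A' \<longrightarrow> finite (A \<inter> A') \<and> card (A \<inter> A') < d)"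

definition conflict_free :: "('a \<Rightarrow> 'b) \<Rightarrow> 'a set set \<Rightarrow> bool" where
  "conflict_free f \<A> \<longleftrightarrow> (\<forall>A\<in>\<A>. I_f f (\<Union>\<A>) A \<noteq> {})"

end

(*
  Call D a system of separating cores of a family \<A> of infinite sets if every D A is an
  infinite subset of A and A meets the union of the other cores in a finite set. Cores give the
  colouring at once: make them pairwise disjoint, colour the n-th point of every core with n + 1
  and everything else with 0. In A, every colour n + 1 that does not occur on the finite set
  A \<inter> \<Union>(other cores) occurs exactly once, namely at the n-th point of D A.

  Cores of a (\<lambda>, \<kappa>, d)-system are built by induction on the size of a ground set X \<supseteq> \<Union>\<A>.
  If |X| \<le> \<kappa>, a member is determined by any d of its points, so |\<A>| \<le> \<kappa>, and the cores
  are chosen along a well-order of \<A> of type |\<A>|: for \<kappa> = \<omega> take A minus its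
  predecessors; for \<kappa> > \<omega> take a countable subset of A avoiding every member that meets the
  cores chosen so far in d points (there are fewer than \<kappa> of those). If |X| > \<kappa>, write X as
  the union of an increasing chain of sets T x of size < |X| that are closed in the sense that a
  member meeting T x in d points lies inside it. Each member lies inside a least T x and meets
  the earlier ones in a finite set; trimmed by that finite set, the members of level x form a
  system on the smaller ground set T x, and the cores of the levels combine to cores of \<A>.
*)

theory Submission
  imports
    Defs
    "HOL-Library.Countable_Set_Type"
    "HOL-Algebra.Free_Abelian_Groups"
begin

unbundle cardinal_syntax

section \<open>Meeting in d points\<close>

definition meets :: "nat \<Rightarrow> 'a set \<Rightarrow> 'a set \<Rightarrow> bool" where
  "meets d A S \<longleftrightarrow> (\<exists>F \<subseteq> A \<inter> S. finite F \<and> card F = d)"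

definition almost_disjoint :: "nat \<Rightarrow> 'a set set \<Rightarrow> bool" where
  "almost_disjoint d \<A> \<longleftrightarrow>
     (\<forall>A\<in>\<A>. \<forall>A'\<in>\<A>. A \<noteq> A' \<longrightarrow> finite (A \<inter> A') \<and> card (A \<inter> A') < d)"

definition separating_cores :: "'a set set \<Rightarrow> ('a set \<Rightarrow> 'a set) \<Rightarrow> bool" where
  "separating_cores \<A> D \<longleftrightarrow>
     (\<forall>A\<in>\<A>. D A \<subseteq> A \<and> infinite (D A) \<and> finite (A \<inter> \<Union>(D ` (\<A> - {A}))))"

lemma separating_coresD:
  assumes "separating_cores \<A> D" and "A \<in> \<A>"
  shows "D A \<subseteq> A" and "infinite (D A)" and "finite (A \<inter> \<Union>(D ` (\<A> - {A})))"
  using assms unfolding separating_cores_def by blast+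

lemma not_meets_iff: "\<not> meets d A S \<longleftrightarrow> finite (A \<inter> S) \<and> card (A \<inter> S) < d"
proof
  assume not_meets: "\<not> meets d A S"
  have "finite (A \<inter> S)"
    using infinite_arbitrarily_large[of "A \<inter> S" d] not_meets unfolding meets_def by blast
  moreover have "card (A \<inter> S) < d"
  proof (rule ccontr)
    assume "\<not> card (A \<inter> S) < d"
    then have "d \<le> card (A \<inter> S)" by simp
    then obtain F where "F \<subseteq> A \<inter> S" "card F = d" "finite F"
      by (rule obtain_subset_with_card_n)
    with not_meets show False unfolding meets_def by blast
  qed
  ultimately show "finite (A \<inter> S) \<and> card (A \<inter> S) < d" by simp
next
  assume small: "finite (A \<inter> S) \<and> card (A \<inter> S) < d"
  show "\<not> meets d A S"
  proof
    assume "meets d A S"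
    then obtain F where "F \<subseteq> A \<inter> S" "card F = d" unfolding meets_def by blast
    then show False using small card_mono[of "A \<inter> S" F] by linarith
  qed
qed

lemma meets_mono: "meets d A S \<Longrightarrow> S \<subseteq> S' \<Longrightarrow> meets d A S'"
  unfolding meets_def by blast

lemma meets_if_subset: "infinite A \<Longrightarrow> A \<subseteq> S \<Longrightarrow> meets d A S"
  using infinite_arbitrarily_large[of A d] unfolding meets_def by blast

lemma almost_disjoint_not_meets:
  "almost_disjoint d \<A> \<Longrightarrow> A \<in> \<A> \<Longrightarrow> A' \<in> \<A> \<Longrightarrow> A \<noteq> A' \<Longrightarrow> \<not> meets d A A'"
  unfolding almost_disjoint_def not_meets_iff by blast

lemma almost_disjoint_finite_Int:
  "almost_disjoint d \<A> \<Longrightarrow> A \<in> \<A> \<Longrightarrow> A' \<in> \<A> \<Longrightarrow> A \<noteq> A' \<Longrightarrow> finite (A \<inter> A')"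
  unfolding almost_disjoint_def by blast

lemma almost_disjoint_image_subsets:
  assumes "almost_disjoint d \<A>" and "\<B> \<subseteq> \<A>" and "\<And>A. A \<in> \<B> \<Longrightarrow> P A \<subseteq> A"
  shows "almost_disjoint d (P ` \<B>)"
  unfolding almost_disjoint_def
proof (intro ballI impI)
  fix B B' assume "B \<in> P ` \<B>" "B' \<in> P ` \<B>" "B \<noteq> B'"
  then obtain A A' where "A \<in> \<B>" "A' \<in> \<B>" "B = P A" "B' = P A'" "A \<noteq> A'" by blast
  then have "finite (A \<inter> A') \<and> card (A \<inter> A') < d" and "B \<inter> B' \<subseteq> A \<inter> A'"
    using assms unfolding almost_disjoint_def by blast+
  then show "finite (B \<inter> B') \<and> card (B \<inter> B') < d"
    using card_mono[of "A \<inter> A'" "B \<inter> B'"] finite_subset[of "B \<inter> B'" "A \<inter> A'"] by linarith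
qed

lemma card_of_meeting_members:
  assumes "almost_disjoint d \<A>"
  shows "|{A\<in>\<A>. meets d A Y}| \<le>o |Fpow Y|"
proof -
  define witness where "witness A = (SOME F. F \<subseteq> A \<inter> Y \<and> finite F \<and> card F = d)" for A
  have witness: "witness A \<subseteq> A \<inter> Y \<and> finite (witness A) \<and> card (witness A) = d"
    if "meets d A Y" for A
    using that unfolding witness_def meets_def by (rule someI_ex)
  have "inj_on witness {A\<in>\<A>. meets d A Y}"
  proof (rule inj_onI)
    fix A A' assume "A \<in> {A\<in>\<A>. meets d A Y}" "A' \<in> {A\<in>\<A>. meets d A Y}" "witness A = witness A'"
    then have "A \<in> \<A>" "A' \<in> \<A>" "meets d A A'"
      using witness[of A] witness[of A'] unfolding meets_def by auto
    then show "A = A'" using almost_disjoint_not_meets[OF assms] by blast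
  qed
  moreover have "witness ` {A\<in>\<A>. meets d A Y} \<subseteq> Fpow Y"
    using witness unfolding Fpow_def by blast
  ultimately show ?thesis using card_of_ordLeq by blast
qed

lemma finite_Int_Union_chain:
  assumes "subset.chain UNIV \<C>" and "\<And>C. C \<in> \<C> \<Longrightarrow> \<not> meets d A C"
  shows "finite (A \<inter> \<Union>\<C>)"
proof (rule ccontr)
  assume "infinite (A \<inter> \<Union>\<C>)"
  then obtain F where F: "F \<subseteq> A \<inter> \<Union>\<C>" "finite F" "card F = d"
    using infinite_arbitrarily_large by blast
  moreover have "\<C> \<noteq> {}" using \<open>infinite (A \<inter> \<Union>\<C>)\<close> by auto
  ultimately obtain C where "C \<in> \<C>" "F \<subseteq> C"
    using finite_subset_Union_chain[OF F(2) _ _ assms(1)] by blast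
  then have "meets d A C" using F unfolding meets_def by blast
  with assms(2) \<open>C \<in> \<C>\<close> show False by blast
qed

lemma subset_chain_image_mono:
  assumes "Well_order r" and "S \<subseteq> Field r" and "\<And>x y. (x, y) \<in> r \<Longrightarrow> T x \<subseteq> T y"
  shows "subset.chain UNIV (T ` S)"
  unfolding subset_chain_def
proof (intro conjI ballI)
  fix C C' assume "C \<in> T ` S" "C' \<in> T ` S"
  then obtain x y where "x \<in> Field r" "y \<in> Field r" "C = T x" "C' = T y"
    using assms(2) by blast
  then show "C \<subseteq> C' \<or> C' \<subseteq> C"
    using wo_rel.TOTALS[of r] assms(1,3) unfolding wo_rel_def by blast
qed simp

lemma subset_chain_range_mono:
  fixes T :: "nat \<Rightarrow> 'a set"
  assumes "mono T"
  shows "subset.chain UNIV (range T)"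
  unfolding subset_chain_def
proof (intro conjI ballI)
  fix C C' assume "C \<in> range T" "C' \<in> range T"
  then obtain m n where "C = T m" "C' = T n" by blast
  then show "C \<subseteq> C' \<or> C' \<subseteq> C"
    using nat_le_linear[of m n] monoD[OF assms] by blast
qed simp

section \<open>Cardinal arithmetic\<close>

lemma card_of_Fpow_ordLeq:
  assumes "infinite M" and "|Y| \<le>o |M|"
  shows "|Fpow Y| \<le>o |M|"
proof (cases "finite Y")
  case True
  then have "finite (Fpow Y)" by (simp add: Fpow_Pow_finite)
  then show ?thesis using assms(1) by (simp add: ordLess_imp_ordLeq)
next
  case False
  then show ?thesis using assms(2) card_of_Fpow_infinite ordIso_ordLeq_trans by blast
qed

lemma card_of_Fpow_ordLess:
  assumes "infinite K" and "|Y| <o |K|"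
  shows "|Fpow Y| <o |K|"
proof (cases "finite Y")
  case True
  then have "finite (Fpow Y)" by (simp add: Fpow_Pow_finite)
  then show ?thesis using assms(1) by simp
next
  case False
  then show ?thesis using assms(2) card_of_Fpow_infinite ordIso_ordLess_trans by blast
qed

lemma uncountable_nat_ordLess: "uncountable K \<Longrightarrow> |UNIV :: nat set| <o |K|"
  by (simp add: countable_card_of_nat not_ordLeq_iff_ordLess)

lemma card_of_UN_countable_ordLess:
  assumes "uncountable K" and "|I| <o |K|" and "\<And>i. i \<in> I \<Longrightarrow> countable (f i)"
  shows "|\<Union>i\<in>I. f i| <o |K|"
proof (cases "finite I")
  case True
  then have "countable (\<Union>i\<in>I. f i)" using assms(3) by (simp add: countable_finite)
  then show ?thesis
    unfolding countable_card_of_nat using uncountable_nat_ordLess[OF assms(1)] by (rule ordLeq_ordLess_trans)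
next
  case False
  have "|\<Union>i\<in>I. f i| \<le>o |I|"
  proof (rule card_of_UNION_ordLeq_infinite[OF False])
    show "|I| \<le>o |I|" by simp
    show "\<forall>i\<in>I. |f i| \<le>o |I|"
    proof
      fix i assume "i \<in> I"
      then have "|f i| \<le>o |UNIV :: nat set|" using assms(3) countable_card_of_nat by blast
      then show "|f i| \<le>o |I|" using False infinite_iff_card_of_nat ordLeq_transitive by blast
    qed
  qed
  then show ?thesis using assms(2) by (rule ordLeq_ordLess_trans)
qed

lemma infinite_Diff_ordLess:
  assumes "A \<approx> K" and "infinite K" and "|B| <o |K|"
  shows "infinite (A - B)"
proof
  assume "finite (A - B)"
  then have "|A - B| <o |K|" using assms(2) by simp
  then have "|B \<union> (A - B)| <o |K|" using card_of_Un_ordLess_infinite[OF assms(2,3)] by blast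
  then have "|A| <o |K|" using card_of_mono1[of A "B \<union> (A - B)"] by (blast intro: ordLeq_ordLess_trans)
  moreover have "|K| \<le>o |A|"
    using assms(1) eqpoll_iff_card_of_ordIso ordIso_iff_ordLeq by blast
  ultimately show False using not_ordLess_ordLeq by blast
qed

lemma eqpoll_Diff_finite:
  assumes "infinite A" and "finite (A \<inter> B)"
  shows "A - B \<approx> A"
proof -
  have "|A - (A \<inter> B)| =o |A|" using card_of_infinite_diff_finite[OF assms] .
  moreover have "A - (A \<inter> B) = A - B" by blast
  ultimately show ?thesis unfolding eqpoll_iff_card_of_ordIso by simp
qed

lemma card_of_underS_subset: "underS (card_of S) x \<subseteq> S - {x}"
  unfolding underS_def using FieldI1[of _ x "|S|"] by auto

lemma underS_cases:
  assumes "Well_order r" and "x \<in> Field r" and "y \<in> Field r"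
  shows "x = y \<or> x \<in> underS r y \<or> y \<in> underS r x"
  using assms wo_rel.TOTALS[of r] unfolding wo_rel_def underS_def by blast

lemma card_of_underS_cases:
  assumes "x \<in> S" and "y \<in> S"
  shows "x = y \<or> x \<in> underS (card_of S) y \<or> y \<in> underS (card_of S) x"
  using underS_cases[OF card_of_Well_order, of x S y] assms by simp

lemma card_of_underS_ordLess: "x \<in> S \<Longrightarrow> |underS (card_of S) x| <o |S|"
  using card_of_underS[OF card_of_Card_order, of x S] by simp

section \<open>Colourings from separating cores\<close>

lemma obtain_core_enumeration:
  assumes infinite: "\<And>A. A \<in> \<A> \<Longrightarrow> infinite (E A)"
    and disjoint: "\<And>A A'. A \<in> \<A> \<Longrightarrow> A' \<in> \<A> \<Longrightarrow> A \<noteq> A' \<Longrightarrow> E A \<inter> E A' = {}"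
  obtains g :: "'a set \<Rightarrow> nat \<Rightarrow> 'a" and f :: "'a \<Rightarrow> nat"
  where "\<And>A n. A \<in> \<A> \<Longrightarrow> g A n \<in> E A"
    and "\<And>A n. A \<in> \<A> \<Longrightarrow> f (g A n) = Suc n"
    and "\<And>y n. f y = Suc n \<Longrightarrow> \<exists>A\<in>\<A>. y = g A n"
proof -
  have "\<forall>A\<in>\<A>. \<exists>g :: nat \<Rightarrow> 'a. inj g \<and> range g \<subseteq> E A"
    using infinite infinite_countable_subset by blast
  from bchoice[OF this] obtain g :: "'a set \<Rightarrow> nat \<Rightarrow> 'a"
    where g: "\<And>A. A \<in> \<A> \<Longrightarrow> inj (g A) \<and> range (g A) \<subseteq> E A" by blast
  let ?P = "\<A> \<times> (UNIV :: nat set)"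
  let ?G = "\<lambda>(A, n). g A n"
  have inj_G: "inj_on ?G ?P"
  proof (rule inj_onI, clarify)
    fix A n A' n' assume A: "A \<in> \<A>" and A': "A' \<in> \<A>" and eq: "g A n = g A' n'"
    have in_E: "g A n \<in> E A" "g A' n' \<in> E A'"
      using g[OF A] g[OF A'] by (simp_all add: image_subset_iff)
    have "A = A'"
    proof (rule ccontr)
      assume "A \<noteq> A'"
      with disjoint[OF A A'] in_E eq show False by auto
    qed
    then show "A = A' \<and> n = n'" using eq g[OF A] by (simp add: inj_eq)
  qed
  define f where "f x = (if x \<in> ?G ` ?P then Suc (snd (inv_into ?P ?G x)) else 0)" for x
  show thesis
  proof
    show "g A n \<in> E A" if "A \<in> \<A>" for A n using g[OF that] by (simp add: image_subset_iff)
    show "f (g A n) = Suc n" if "A \<in> \<A>" for A n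
    proof -
      have "(A, n) \<in> ?P" using that by simp
      then have "inv_into ?P ?G (g A n) = (A, n)"
        using inv_into_f_f[OF inj_G, of "(A, n)"] by simp
      then show ?thesis unfolding f_def using \<open>(A, n) \<in> ?P\<close> by force
    qed
    show "\<exists>A\<in>\<A>. y = g A n" if "f y = Suc n" for y n
    proof -
      have y: "y \<in> ?G ` ?P" using that unfolding f_def by (simp split: if_splits)
      then have "inv_into ?P ?G y \<in> ?P" "?G (inv_into ?P ?G y) = y"
        by (rule inv_into_into, rule f_inv_into_f)
      moreover have "snd (inv_into ?P ?G y) = n" using that y unfolding f_def by simp
      ultimately show ?thesis by (cases "inv_into ?P ?G y") auto
    qed
  qed
qed

lemma colouring_from_disjoint_cores:
  assumes cores: "separating_cores \<A> E"
    and disjoint: "\<And>A A'. A \<in> \<A> \<Longrightarrow> A' \<in> \<A> \<Longrightarrow> A \<noteq> A' \<Longrightarrow> E A \<inter> E A' = {}"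
  shows "\<exists>f :: 'a \<Rightarrow> nat. \<forall>A\<in>\<A>. finite (UNIV - I_f f (\<Union>\<A>) A)"
proof -
  note E = separating_coresD[OF cores]
  obtain g :: "'a set \<Rightarrow> nat \<Rightarrow> 'a" and f :: "'a \<Rightarrow> nat"
    where g: "\<And>A n. A \<in> \<A> \<Longrightarrow> g A n \<in> E A"
    and f_g: "\<And>A n. A \<in> \<A> \<Longrightarrow> f (g A n) = Suc n"
    and f_Suc: "\<And>y n. f y = Suc n \<Longrightarrow> \<exists>A\<in>\<A>. y = g A n"
    by (rule obtain_core_enumeration[OF E(2) disjoint]) auto
  have "UNIV - I_f f (\<Union>\<A>) A \<subseteq> insert 0 (f ` (A \<inter> \<Union>(E ` (\<A> - {A}))))" if A: "A \<in> \<A>" for A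
  proof
    fix c assume c: "c \<in> UNIV - I_f f (\<Union>\<A>) A"
    show "c \<in> insert 0 (f ` (A \<inter> \<Union>(E ` (\<A> - {A}))))"
    proof (rule ccontr)
      assume c_new: "c \<notin> insert 0 (f ` (A \<inter> \<Union>(E ` (\<A> - {A}))))"
      then obtain n where n: "c = Suc n" by (cases c) auto
      have gA: "g A n \<in> A" using g[OF A] E(1)[OF A] by blast
      have "A \<inter> f -` {c} = {g A n}"
      proof (intro equalityI subsetI)
        fix y assume y: "y \<in> A \<inter> f -` {c}"
        then obtain A' where A': "A' \<in> \<A>" "y = g A' n" using f_Suc n by auto
        have "A' = A"
        proof (rule ccontr)
          assume "A' \<noteq> A"
          then have "y \<in> A \<inter> \<Union>(E ` (\<A> - {A}))" using y A' g by blast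
          then show False using y c_new by blast
        qed
        then show "y \<in> {g A n}" using A' by simp
      qed (use gA f_g[OF A] n in simp)
      then have "c \<in> I_f f (\<Union>\<A>) A"
        unfolding I_f_def using gA A f_g[OF A] n by force
      then show False using c by blast
    qed
  qed
  then show ?thesis using E(3) by (meson finite_imageI finite_insert finite_subset)
qed

lemma colouring_from_cores:
  assumes "separating_cores \<A> D"
  shows "\<exists>f :: 'a \<Rightarrow> nat. \<forall>A\<in>\<A>. finite (UNIV - I_f f (\<Union>\<A>) A)"
proof (rule colouring_from_disjoint_cores)
  let ?E = "\<lambda>A. D A - \<Union>(D ` (\<A> - {A}))"
  show "?E A \<inter> ?E A' = {}" if "A \<in> \<A>" "A' \<in> \<A>" "A \<noteq> A'" for A A'
    using that by blast
  show "separating_cores \<A> ?E"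
    unfolding separating_cores_def
  proof (intro ballI conjI)
    fix A assume A: "A \<in> \<A>"
    note D = separating_coresD[OF assms A]
    show "?E A \<subseteq> A" using D(1) by blast
    have "D A \<subseteq> ?E A \<union> (A \<inter> \<Union>(D ` (\<A> - {A})))" using D(1) by blast
    then show "infinite (?E A)" using D(2,3) finite_subset by blast
    show "finite (A \<inter> \<Union>(?E ` (\<A> - {A})))" using D(3) by (rule rev_finite_subset) blast
  qed
qed

section \<open>Families of at most \<kappa> members\<close>

lemma separating_cores_predecessors:
  assumes "\<And>A. A \<in> \<A> \<Longrightarrow> infinite A"
    and "\<And>A. A \<in> \<A> \<Longrightarrow> finite (A \<inter> \<Union>(underS (card_of \<A>) A))"
  shows "separating_cores \<A> (\<lambda>A. A - \<Union>(underS (card_of \<A>) A))"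
  unfolding separating_cores_def
proof (intro ballI conjI)
  fix A assume A: "A \<in> \<A>"
  let ?D = "\<lambda>A. A - \<Union>(underS (card_of \<A>) A)"
  show "?D A \<subseteq> A" by blast
  have "A \<subseteq> ?D A \<union> (A \<inter> \<Union>(underS (card_of \<A>) A))" by blast
  then show "infinite (?D A)" using assms(1,2)[OF A] by (meson finite_Un finite_subset)
  have "A \<inter> \<Union>(?D ` (\<A> - {A})) \<subseteq> A \<inter> \<Union>(underS (card_of \<A>) A)"
  proof
    fix x assume x: "x \<in> A \<inter> \<Union>(?D ` (\<A> - {A}))"
    then obtain A' where A': "A' \<in> \<A>" "A' \<noteq> A" "x \<in> A'" "x \<notin> \<Union>(underS (card_of \<A>) A')"
      by blast
    then have "A' \<in> underS (card_of \<A>) A" using card_of_underS_cases[OF A'(1) A] x by blast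
    then show "x \<in> A \<inter> \<Union>(underS (card_of \<A>) A)" using x A'(3) by blast
  qed
  then show "finite (A \<inter> \<Union>(?D ` (\<A> - {A})))" using assms(2)[OF A] by (rule finite_subset)
qed

lemma exists_cores_countable:
  assumes "countable \<A>" and "\<And>A. A \<in> \<A> \<Longrightarrow> infinite A" and "almost_disjoint d \<A>"
  shows "\<exists>D. separating_cores \<A> D"
proof -
  have "finite (A \<inter> \<Union>(underS (card_of \<A>) A))" if A: "A \<in> \<A>" for A
  proof -
    have "|underS (card_of \<A>) A| <o |UNIV :: nat set|"
      using card_of_underS_ordLess[OF A] assms(1) unfolding countable_card_of_nat
      by (rule ordLess_ordLeq_trans)
    then have "finite (underS (card_of \<A>) A)" by (simp only: finite_iff_cardOf_nat)
    moreover have "finite (A \<inter> A')" if "A' \<in> underS (card_of \<A>) A" for A'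
      using almost_disjoint_finite_Int[OF assms(3) A] card_of_underS_subset[of \<A> A] that by blast
    ultimately show ?thesis unfolding Int_Union by (rule finite_UN_I)
  qed
  then show ?thesis using separating_cores_predecessors assms(2) by blast
qed

lemma infinite_Diff_meeting_members:
  assumes "uncountable K" and "almost_disjoint d \<A>" and "A \<in> \<A>" and "A \<approx> K"
    and "|Y| <o |K|"
  shows "infinite (A - \<Union>{A'\<in>\<A>. A' \<noteq> A \<and> meets d A' Y})"
proof -
  let ?Q = "{A'\<in>\<A>. A' \<noteq> A \<and> meets d A' Y}"
  have "|?Q| \<le>o |Fpow Y|"
    using card_of_mono1[of ?Q "{A'\<in>\<A>. meets d A' Y}"] card_of_meeting_members[OF assms(2), of Y]
    by (blast intro: ordLeq_transitive)
  moreover have "|Fpow Y| <o |K|"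
    using assms(1,5) by (intro card_of_Fpow_ordLess) (auto dest: countable_finite)
  ultimately have "|?Q| <o |K|" by (rule ordLeq_ordLess_trans)
  moreover have "countable (A \<inter> A')" if "A' \<in> ?Q" for A'
    using almost_disjoint_finite_Int[OF assms(2,3), of A'] that by (auto intro: countable_finite)
  ultimately have "|\<Union>A'\<in>?Q. A \<inter> A'| <o |K|"
    by (rule card_of_UN_countable_ordLess[OF assms(1)])
  moreover have "(\<Union>A'\<in>?Q. A \<inter> A') = A \<inter> \<Union>?Q" by blast
  moreover have "infinite K" using assms(1) by (auto dest: countable_finite)
  ultimately have "infinite (A - A \<inter> \<Union>?Q)" using infinite_Diff_ordLess[OF assms(4)] by simp
  moreover have "A - A \<inter> \<Union>?Q = A - \<Union>?Q" by blast
  ultimately show ?thesis by simp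
qed

locale avoiding_cores =
  fixes d :: nat and \<A> :: "'a set set" and D :: "'a set \<Rightarrow> 'a set"
  assumes almost_disjoint: "almost_disjoint d \<A>"
    and core_subset: "\<And>A. A \<in> \<A> \<Longrightarrow> D A \<subseteq> A"
    and core_infinite: "\<And>A. A \<in> \<A> \<Longrightarrow> infinite (D A)"
    and core_avoids: "\<And>A A'. A \<in> \<A> \<Longrightarrow> A' \<in> \<A> \<Longrightarrow> A' \<noteq> A \<Longrightarrow>
      meets d A' (\<Union>(D ` underS (card_of \<A>) A)) \<Longrightarrow> D A \<inter> A' = {}"
begin

definition cores_upto :: "'a set \<Rightarrow> 'a set" where
  "cores_upto g = \<Union>(D ` under (card_of \<A>) g)"

lemma wo: "wo_rel (card_of \<A>)"
  unfolding wo_rel_def by (rule card_of_Well_order)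

lemma cores_upto_mono: "(g, g') \<in> card_of \<A> \<Longrightarrow> cores_upto g \<subseteq> cores_upto g'"
  unfolding cores_upto_def using under_incr[OF wo_rel.TRANS[OF wo]] by blast

lemma core_subset_cores_upto: "g \<in> \<A> \<Longrightarrow> D g \<subseteq> cores_upto g"
  unfolding cores_upto_def using Refl_under_in[OF wo_rel.REFL[OF wo], of g] by auto

lemma chain_cores_upto: "S \<subseteq> \<A> \<Longrightarrow> subset.chain UNIV (cores_upto ` S)"
  using subset_chain_image_mono[OF card_of_Well_order, of S \<A> cores_upto] cores_upto_mono by simp

lemma later_core_disjoint:
  assumes "A \<in> \<A>" and "A' \<in> \<A>" and "A' \<noteq> A" and "g \<in> underS (card_of \<A>) A'"
    and "meets d A (cores_upto g)"
  shows "D A' \<inter> A = {}"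
proof -
  have "under (card_of \<A>) g \<subseteq> underS (card_of \<A>) A'"
    using under_underS_trans[OF wo_rel.TRANS[OF wo] wo_rel.ANTISYM[OF wo] _ assms(4)] by blast
  then have "cores_upto g \<subseteq> \<Union>(D ` underS (card_of \<A>) A')" unfolding cores_upto_def by blast
  with assms(5) have "meets d A (\<Union>(D ` underS (card_of \<A>) A'))" by (rule meets_mono)
  then show ?thesis using core_avoids[OF assms(2,1)] assms(3) by blast
qed

lemma finite_Int_cores_if_never_meeting:
  assumes "A \<in> \<A>" and "\<And>g. g \<in> \<A> \<Longrightarrow> \<not> meets d A (cores_upto g)"
  shows "finite (A \<inter> \<Union>(D ` (\<A> - {A})))"
proof -
  have "finite (A \<inter> \<Union>(cores_upto ` \<A>))"
    using finite_Int_Union_chain[OF chain_cores_upto[OF order_refl]] assms(2) by blast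
  moreover have "A \<inter> \<Union>(D ` (\<A> - {A})) \<subseteq> A \<inter> \<Union>(cores_upto ` \<A>)"
    using core_subset_cores_upto by blast
  ultimately show ?thesis by (rule rev_finite_subset)
qed

text \<open>Let g be least such that A meets the cores up to g in d points. Cores after g avoid A,
  and the cores before g lie in a chain of sets none of which meets A in d points.\<close>

lemma finite_Int_cores_if_least_meeting:
  assumes A: "A \<in> \<A>" and g: "g \<in> \<A>" "meets d A (cores_upto g)"
    and least: "\<And>y. y \<in> underS (card_of \<A>) g \<Longrightarrow> \<not> meets d A (cores_upto y)"
  shows "finite (A \<inter> \<Union>(D ` (\<A> - {A})))"
proof -
  let ?W = "if g = A then {} else A \<inter> g"
  have "finite (A \<inter> \<Union>(cores_upto ` underS (card_of \<A>) g))"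
    using finite_Int_Union_chain[OF chain_cores_upto[OF card_of_underS_subset[THEN subset_trans]]]
      least by blast
  moreover have "finite ?W" using almost_disjoint_finite_Int[OF almost_disjoint A g(1)] by auto
  moreover have "A \<inter> \<Union>(D ` (\<A> - {A})) \<subseteq> (A \<inter> \<Union>(cores_upto ` underS (card_of \<A>) g)) \<union> ?W"
  proof
    fix x assume "x \<in> A \<inter> \<Union>(D ` (\<A> - {A}))"
    then obtain A' where x: "x \<in> A" "x \<in> D A'" and A': "A' \<in> \<A>" "A' \<noteq> A" by blast
    consider "A' = g" | "A' \<in> underS (card_of \<A>) g" | "g \<in> underS (card_of \<A>) A'"
      using card_of_underS_cases[OF A'(1) g(1)] by blast
    then show "x \<in> (A \<inter> \<Union>(cores_upto ` underS (card_of \<A>) g)) \<union> ?W"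
    proof cases
      case 1
      then show ?thesis using x A' core_subset[OF A'(1)] by auto
    next
      case 2
      then show ?thesis using x core_subset_cores_upto[OF A'(1)] by blast
    next
      case 3
      then show ?thesis using later_core_disjoint[OF A A'(1,2) 3 g(2)] x by blast
    qed
  qed
  ultimately show ?thesis by (meson finite_UnI finite_subset)
qed

lemma separating_cores: "separating_cores \<A> D"
  unfolding separating_cores_def
proof (intro ballI conjI)
  fix A assume A: "A \<in> \<A>"
  show "D A \<subseteq> A" "infinite (D A)" using core_subset[OF A] core_infinite[OF A] .
  show "finite (A \<inter> \<Union>(D ` (\<A> - {A})))"
  proof (cases "\<exists>g\<in>\<A>. meets d A (cores_upto g)")
    case True
    then obtain g0 where "g0 \<in> {g\<in>\<A>. meets d A (cores_upto g)}" by blast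
    then obtain g where "g \<in> {g\<in>\<A>. meets d A (cores_upto g)}"
      and least: "\<And>y. (y, g) \<in> card_of \<A> - Id \<Longrightarrow> y \<notin> {g\<in>\<A>. meets d A (cores_upto g)}"
      by (rule wfE_min[OF wo_rel.WF[OF wo]]) blast
    then have g: "g \<in> \<A>" "meets d A (cores_upto g)" by simp_all
    show ?thesis
    proof (rule finite_Int_cores_if_least_meeting[OF A g])
      fix y assume y: "y \<in> underS (card_of \<A>) g"
      then have "y \<in> \<A>" "(y, g) \<in> card_of \<A> - Id"
        using card_of_underS_subset[of \<A> g] unfolding underS_def by auto
      then show "\<not> meets d A (cores_upto y)" using least by blast
    qed
  next
    case False
    then show ?thesis by (intro finite_Int_cores_if_never_meeting[OF A]) blast
  qed
qed

end

lemma exists_cores_avoiding_meeting: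
  fixes \<A> :: "'a set set"
  assumes "uncountable K" and "|\<A>| \<le>o |K|" and "\<And>A. A \<in> \<A> \<Longrightarrow> A \<approx> K"
    and "almost_disjoint d \<A>"
  shows "\<exists>D. avoiding_cores d \<A> D"
proof -
  let ?R = "card_of \<A> - Id"
  have wf: "wf ?R" using wo_rel.WF card_of_Well_order[of \<A>] unfolding wo_rel_def by blast
  define avoid where "avoid A Y = A - \<Union>{A'\<in>\<A>. A' \<noteq> A \<and> meets d A' Y}" for A Y
  define H where "H f A = (SOME C. C \<subseteq> avoid A (\<Union>(f ` underS (card_of \<A>) A)) \<and> countable C \<and> infinite C)"
    for f :: "'a set \<Rightarrow> 'a set" and A
  define D where "D = wfrec ?R H"
  have D_eq: "D A = H D A" for A
  proof -
    have "D A = H (cut D ?R A) A" unfolding D_def by (rule wfrec[OF wf])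
    moreover have "cut D ?R A ` underS (card_of \<A>) A = D ` underS (card_of \<A>) A"
      by (rule image_cong) (auto simp: cut_apply underS_def)
    ultimately show ?thesis unfolding H_def by simp
  qed
  have D_avoid: "A \<in> \<A> \<longrightarrow>
      D A \<subseteq> avoid A (\<Union>(D ` underS (card_of \<A>) A)) \<and> countable (D A) \<and> infinite (D A)"
    for A
  proof (induction A rule: wf_induct_rule[OF wf])
    case (1 A)
    show ?case
    proof
      assume A: "A \<in> \<A>"
      have "|\<Union>(D ` underS (card_of \<A>) A)| <o |K|"
      proof (rule card_of_UN_countable_ordLess[OF assms(1)])
        show "|underS (card_of \<A>) A| <o |K|"
          using card_of_underS_ordLess[OF A] assms(2) by (rule ordLess_ordLeq_trans)
        show "countable (D y)" if y: "y \<in> underS (card_of \<A>) A" for y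
        proof -
          have "(y, A) \<in> ?R" using y unfolding underS_def by blast
          moreover have "y \<in> \<A>" using y card_of_underS_subset[of \<A> A] by blast
          ultimately show ?thesis using 1 by blast
        qed
      qed
      \<comment> \<open>fewer than \<kappa> members meet the earlier countable cores in d points, each of them
        meets A in a finite set, so the recursion never gets stuck\<close>
      then have "infinite (avoid A (\<Union>(D ` underS (card_of \<A>) A)))"
        unfolding avoid_def by (rule infinite_Diff_meeting_members[OF assms(1,4) A assms(3)[OF A]])
      then have "\<exists>C. C \<subseteq> avoid A (\<Union>(D ` underS (card_of \<A>) A)) \<and> countable C \<and> infinite C"
        using infinite_countable_subset' by blast
      then show "D A \<subseteq> avoid A (\<Union>(D ` underS (card_of \<A>) A)) \<and> countable (D A) \<and> infinite (D A)"
        unfolding D_eq[of A] H_def by (rule someI_ex)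
    qed
  qed
  have "avoiding_cores d \<A> D"
    by unfold_locales (use assms(4) D_avoid in \<open>auto simp: avoid_def\<close>)
  then show ?thesis by blast
qed

lemma exists_cores_small_family:
  fixes K :: "'k set" and \<A> :: "'a set set"
  assumes "infinite K" and "|\<A>| \<le>o |K|" and "\<And>A. A \<in> \<A> \<Longrightarrow> A \<approx> K"
    and "almost_disjoint d \<A>"
  shows "\<exists>D. separating_cores \<A> D"
proof (cases "countable K")
  case True
  have "countable \<A>" using countable_ordLeq[OF assms(2) True] .
  moreover have "infinite A" if "A \<in> \<A>" for A
    using assms(1) assms(3)[OF that] eqpoll_finite_iff by blast
  ultimately show ?thesis using exists_cores_countable[OF _ _ assms(4)] by blast
next
  case False
  then obtain D where "avoiding_cores d \<A> D"
    using exists_cores_avoiding_meeting[OF _ assms(2-4)] by blast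
  then show ?thesis using avoiding_cores.separating_cores by blast
qed

section \<open>Ground sets larger than \<kappa>\<close>

definition closure_step :: "nat \<Rightarrow> 'a set set \<Rightarrow> 'a set \<Rightarrow> 'a set" where
  "closure_step d \<A> T = T \<union> \<Union>{A\<in>\<A>. meets d A T}"

definition meet_closure :: "nat \<Rightarrow> 'a set set \<Rightarrow> 'a set \<Rightarrow> 'a set" where
  "meet_closure d \<A> S = (\<Union>n. (closure_step d \<A> ^^ n) S)"

lemma mono_closure_step_iterates: "mono (\<lambda>n. (closure_step d \<A> ^^ n) S)"
  unfolding mono_iff_le_Suc by (simp add: closure_step_def)

lemma closure_step_mono: "T \<subseteq> T' \<Longrightarrow> closure_step d \<A> T \<subseteq> closure_step d \<A> T'"
  unfolding closure_step_def using meets_mono[of d _ T T'] by blast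

lemma subset_meet_closure: "S \<subseteq> meet_closure d \<A> S"
  unfolding meet_closure_def by (metis UN_upper UNIV_I funpow_0)

lemma meet_closure_mono:
  assumes "S \<subseteq> S'"
  shows "meet_closure d \<A> S \<subseteq> meet_closure d \<A> S'"
proof -
  have "(closure_step d \<A> ^^ n) S \<subseteq> (closure_step d \<A> ^^ n) S'" for n
    by (induction n) (simp_all add: assms closure_step_mono)
  then show ?thesis unfolding meet_closure_def by blast
qed

lemma meet_closure_closed:
  assumes "A \<in> \<A>" and "meets d A (meet_closure d \<A> S)"
  shows "A \<subseteq> meet_closure d \<A> S"
proof -
  let ?T = "\<lambda>n. (closure_step d \<A> ^^ n) S"
  obtain F where F: "F \<subseteq> A" "F \<subseteq> \<Union>(range ?T)" "finite F" "card F = d"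
    using assms(2) unfolding meets_def meet_closure_def by blast
  then obtain n where "F \<subseteq> ?T n"
    using finite_subset_Union_chain[OF F(3) F(2) _ subset_chain_range_mono[OF mono_closure_step_iterates]]
    by blast
  then have "meets d A (?T n)" using F unfolding meets_def by blast
  then have "A \<subseteq> ?T (Suc n)" using assms(1) unfolding closure_step_def by auto
  then show ?thesis unfolding meet_closure_def by blast
qed

lemma card_of_closure_step:
  assumes "infinite M" and "|T| \<le>o |M|" and "|K| \<le>o |M|" and "\<And>A. A \<in> \<A> \<Longrightarrow> A \<approx> K"
    and "almost_disjoint d \<A>"
  shows "|closure_step d \<A> T| \<le>o |M|"
proof -
  have "|{A\<in>\<A>. meets d A T}| \<le>o |M|"
    using card_of_meeting_members[OF assms(5), of T] card_of_Fpow_ordLeq[OF assms(1,2)]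
    by (rule ordLeq_transitive)
  moreover have "|A| \<le>o |M|" if "A \<in> \<A>" for A
    using assms(4)[OF that] assms(3) eqpoll_iff_card_of_ordIso ordIso_ordLeq_trans by blast
  ultimately have "|\<Union>{A\<in>\<A>. meets d A T}| \<le>o |M|"
    using card_of_UNION_ordLeq_infinite[OF assms(1), of "{A\<in>\<A>. meets d A T}" id] by simp
  then show ?thesis
    unfolding closure_step_def by (rule card_of_Un_ordLeq_infinite[OF assms(1,2)])
qed

lemma card_of_meet_closure:
  assumes "infinite M" and "|S| \<le>o |M|" and "|K| \<le>o |M|" and "\<And>A. A \<in> \<A> \<Longrightarrow> A \<approx> K"
    and "almost_disjoint d \<A>"
  shows "|meet_closure d \<A> S| \<le>o |M|"
proof -
  have iterates: "\<forall>n\<in>UNIV. |(closure_step d \<A> ^^ n) S| \<le>o |M|"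
  proof
    fix n :: nat
    show "|(closure_step d \<A> ^^ n) S| \<le>o |M|"
      by (induction n) (auto intro: card_of_closure_step[OF assms(1) _ assms(3-5)] assms(2))
  qed
  have "|UNIV :: nat set| \<le>o |M|" using assms(1) infinite_iff_card_of_nat by blast
  from card_of_UNION_ordLeq_infinite[OF assms(1) this iterates]
  show ?thesis unfolding meet_closure_def .
qed

lemma card_of_meet_closure_ordLess:
  assumes "infinite K" and "|K| <o |X|" and "|S| <o |X|" and "\<And>A. A \<in> \<A> \<Longrightarrow> A \<approx> K"
    and "almost_disjoint d \<A>"
  shows "|meet_closure d \<A> S| <o |X|"
proof (cases "|K| \<le>o |S|")
  case True
  have "infinite S" using True assms(1) card_of_ordLeq_infinite by blast
  then have "|meet_closure d \<A> S| \<le>o |S|"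
    using card_of_meet_closure[OF _ ordLeq_refl[OF card_of_Card_order] True assms(4,5)] by blast
  then show ?thesis using assms(3) by (rule ordLeq_ordLess_trans)
next
  case False
  then have "|S| \<le>o |K|" by (simp add: not_ordLeq_iff_ordLess ordLess_imp_ordLeq)
  then have "|meet_closure d \<A> S| \<le>o |K|"
    using card_of_meet_closure[OF assms(1) _ ordLeq_refl[OF card_of_Card_order] assms(4,5)] by blast
  then show ?thesis using assms(2) by (rule ordLeq_ordLess_trans)
qed

locale levelled_family =
  fixes d :: nat and \<A> :: "'a set set" and r :: "'x rel"
    and T :: "'x \<Rightarrow> 'a set" and lev :: "'a set \<Rightarrow> 'x"
  assumes well_order: "Well_order r" and almost_disjoint: "almost_disjoint d \<A>"
    and member_infinite: "\<And>A. A \<in> \<A> \<Longrightarrow> infinite A"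
    and lev_in_Field: "\<And>A. A \<in> \<A> \<Longrightarrow> lev A \<in> Field r"
    and subset_level: "\<And>A. A \<in> \<A> \<Longrightarrow> A \<subseteq> T (lev A)"
    and finite_below_level: "\<And>A. A \<in> \<A> \<Longrightarrow> finite (A \<inter> \<Union>(T ` underS r (lev A)))"
begin

definition trim :: "'x \<Rightarrow> 'a set \<Rightarrow> 'a set" where
  "trim x A = A - \<Union>(T ` underS r x)"

definition level :: "'x \<Rightarrow> 'a set set" where
  "level x = trim x ` {A\<in>\<A>. lev A = x}"

lemma eqpoll_trim: "A \<in> \<A> \<Longrightarrow> trim (lev A) A \<approx> A"
  unfolding trim_def by (rule eqpoll_Diff_finite[OF member_infinite finite_below_level])

lemma trim_inj:
  assumes "A \<in> \<A>" and "A' \<in> \<A>" and "lev A = lev A'" and "trim (lev A) A = trim (lev A') A'"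
  shows "A = A'"
proof (rule ccontr)
  assume "A \<noteq> A'"
  then have "finite (A \<inter> A')" by (rule almost_disjoint_finite_Int[OF almost_disjoint assms(1,2)])
  moreover have "trim (lev A) A \<subseteq> A \<inter> A'" using assms(4) unfolding trim_def by blast
  moreover have "infinite (trim (lev A) A)"
    using eqpoll_trim[OF assms(1)] eqpoll_finite_iff member_infinite[OF assms(1)] by blast
  ultimately show False using finite_subset by blast
qed

lemma trim_other_level:
  assumes A: "A \<in> \<A>" and A': "A' \<in> \<A>" and "lev A' \<noteq> lev A"
    and y: "y \<in> A" "y \<in> trim (lev A') A'"
  shows "y \<in> \<Union>(T ` underS r (lev A))"
proof -
  consider "lev A' \<in> underS r (lev A)" | "lev A \<in> underS r (lev A')"
    using underS_cases[OF well_order lev_in_Field[OF A'] lev_in_Field[OF A]] assms(3) by blast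
  then show ?thesis
  proof cases
    case 1
    then show ?thesis using y(2) subset_level[OF A'] unfolding trim_def by blast
  next
    case 2
    then have "y \<in> \<Union>(T ` underS r (lev A'))" using y(1) subset_level[OF A] by blast
    then show ?thesis using y(2) unfolding trim_def by blast
  qed
qed

lemma separating_cores_from_levels:
  assumes C: "\<And>x. x \<in> Field r \<Longrightarrow> separating_cores (level x) (C x)"
  shows "separating_cores \<A> (\<lambda>A. C (lev A) (trim (lev A) A))"
proof -
  have level_member: "trim (lev A) A \<in> level (lev A)" if "A \<in> \<A>" for A
    unfolding level_def using that by blast
  have core: "C (lev A) (trim (lev A) A) \<subseteq> trim (lev A) A" "infinite (C (lev A) (trim (lev A) A))"
    "finite (trim (lev A) A \<inter> \<Union>(C (lev A) ` (level (lev A) - {trim (lev A) A})))"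
    if "A \<in> \<A>" for A
    using separating_coresD[OF C[OF lev_in_Field[OF that]] level_member[OF that]] by auto
  show ?thesis
    unfolding separating_cores_def
  proof (intro ballI conjI)
    fix A assume A: "A \<in> \<A>"
    let ?x = "lev A" and ?D = "\<lambda>A. C (lev A) (trim (lev A) A)"
    show "?D A \<subseteq> A" using core(1)[OF A] unfolding trim_def by blast
    show "infinite (?D A)" using core(2)[OF A] .
    have "A \<inter> \<Union>(?D ` (\<A> - {A})) \<subseteq>
        (A \<inter> \<Union>(T ` underS r ?x)) \<union> (trim ?x A \<inter> \<Union>(C ?x ` (level ?x - {trim ?x A})))"
    proof
      fix y assume "y \<in> A \<inter> \<Union>(?D ` (\<A> - {A}))"
      then obtain A' where y: "y \<in> A" "y \<in> ?D A'" and A': "A' \<in> \<A>" "A' \<noteq> A" by blast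
      have y_trim: "y \<in> trim (lev A') A'" using y(2) core(1)[OF A'(1)] by blast
      show "y \<in> (A \<inter> \<Union>(T ` underS r ?x)) \<union> (trim ?x A \<inter> \<Union>(C ?x ` (level ?x - {trim ?x A})))"
      proof (cases "lev A' = ?x")
        case True
        have "trim ?x A' \<in> level ?x" unfolding level_def using A'(1) True by blast
        moreover have "trim ?x A' \<noteq> trim ?x A"
        proof
          assume "trim ?x A' = trim ?x A"
          then have "A' = A" using trim_inj[OF A'(1) A True] True by simp
          with A'(2) show False ..
        qed
        moreover have "y \<in> trim ?x A" using y(1) y_trim True unfolding trim_def by simp
        moreover have "y \<in> C ?x (trim ?x A')" using y(2) True by simp
        ultimately show ?thesis by blast
      next
        case False
        then show ?thesis using trim_other_level[OF A A'(1) False y(1) y_trim] y(1) by blast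
      qed
    qed
    then show "finite (A \<inter> \<Union>(?D ` (\<A> - {A})))"
      using finite_below_level[OF A] core(3)[OF A] by (meson finite_UnI finite_subset)
  qed
qed

lemma exists_cores_from_levels:
  assumes "\<And>x. x \<in> Field r \<Longrightarrow> \<exists>C. separating_cores (level x) C"
  shows "\<exists>D. separating_cores \<A> D"
proof -
  have "\<forall>x\<in>Field r. \<exists>C. separating_cores (level x) C" using assms by blast
  from bchoice[OF this] obtain C :: "'x \<Rightarrow> 'a set \<Rightarrow> 'a set"
    where "\<And>x. x \<in> Field r \<Longrightarrow> separating_cores (level x) (C x)" by blast
  then show ?thesis using separating_cores_from_levels by blast
qed

end

definition closure_chain :: "nat \<Rightarrow> 'a set set \<Rightarrow> 'a set \<Rightarrow> 'a \<Rightarrow> 'a set" where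
  "closure_chain d \<A> X x = meet_closure d \<A> (under (card_of X) x)"

lemma closure_chain_mono:
  "(x, y) \<in> card_of X \<Longrightarrow> closure_chain d \<A> X x \<subseteq> closure_chain d \<A> X y"
  unfolding closure_chain_def
  by (rule meet_closure_mono, rule under_incr[OF wo_rel.TRANS]) (simp_all add: wo_rel_def)

lemma subset_chain_closure_chain: "S \<subseteq> X \<Longrightarrow> subset.chain UNIV (closure_chain d \<A> X ` S)"
  by (intro subset_chain_image_mono[OF card_of_Well_order _ closure_chain_mono]) simp

lemma card_of_closure_chain:
  assumes "infinite K" and "|K| <o |X|" and "x \<in> X" and "\<And>A. A \<in> \<A> \<Longrightarrow> A \<approx> K"
    and "almost_disjoint d \<A>"
  shows "|closure_chain d \<A> X x| <o |X|"
proof -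
  have "infinite X" using assms(1,2) card_of_ordLeq_infinite ordLess_imp_ordLeq by blast
  moreover have "|underS (card_of X) x| <o |X|" using card_of_underS_ordLess[OF assms(3)] .
  ultimately have "|insert x (underS (card_of X) x)| <o |X|"
    using card_of_Un_singl_ordLess_infinite[of X "underS (card_of X) x" x] by simp
  moreover have "under (card_of X) x = insert x (underS (card_of X) x)"
    using Refl_under_underS[OF wo_rel.REFL, of "card_of X" x] assms(3) by (simp add: wo_rel_def)
  ultimately have "|under (card_of X) x| <o |X|" by simp
  then show ?thesis
    unfolding closure_chain_def by (rule card_of_meet_closure_ordLess[OF assms(1,2) _ assms(4,5)])
qed

lemma member_subset_closure_chain:
  assumes "A \<in> \<A>" and "infinite A" and "A \<subseteq> X"
  shows "\<exists>x\<in>X. A \<subseteq> closure_chain d \<A> X x"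
proof -
  obtain F where F: "F \<subseteq> A" "finite F" "card F = d"
    using infinite_arbitrarily_large[OF assms(2)] by blast
  have "x \<in> closure_chain d \<A> X x" if "x \<in> X" for x
    using Refl_under_in[OF wo_rel.REFL, of "card_of X" x] that subset_meet_closure
    unfolding closure_chain_def by (fastforce simp: wo_rel_def)
  then have "F \<subseteq> \<Union>(closure_chain d \<A> X ` X)" using F(1) assms(3) by blast
  moreover have "closure_chain d \<A> X ` X \<noteq> {}" using assms(2,3) by auto
  ultimately obtain B where "B \<in> closure_chain d \<A> X ` X" "F \<subseteq> B"
    using finite_subset_Union_chain[OF F(2) _ _ subset_chain_closure_chain[OF order_refl]] by blast
  then obtain x where x: "x \<in> X" "F \<subseteq> meet_closure d \<A> (under (card_of X) x)"
    unfolding closure_chain_def by blast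
  then have "meets d A (meet_closure d \<A> (under (card_of X) x))" using F unfolding meets_def by blast
  then have "A \<subseteq> meet_closure d \<A> (under (card_of X) x)" by (rule meet_closure_closed[OF assms(1)])
  then show ?thesis using x(1) unfolding closure_chain_def by blast
qed

lemma obtain_least_level:
  assumes "\<And>A. A \<in> \<A> \<Longrightarrow> infinite A" and "\<Union>\<A> \<subseteq> X"
  obtains lev :: "'a set \<Rightarrow> 'a"
  where "\<And>A. A \<in> \<A> \<Longrightarrow> lev A \<in> X \<and> A \<subseteq> closure_chain d \<A> X (lev A)"
    and "\<And>A y. A \<in> \<A> \<Longrightarrow> y \<in> underS (card_of X) (lev A) \<Longrightarrow> \<not> meets d A (closure_chain d \<A> X y)"
proof
  let ?r = "card_of X" and ?levels = "\<lambda>A. {x\<in>X. A \<subseteq> closure_chain d \<A> X x}"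
  have wo: "wo_rel ?r" unfolding wo_rel_def by (rule card_of_Well_order)
  have levels: "?levels A \<subseteq> Field ?r" "?levels A \<noteq> {}" if "A \<in> \<A>" for A
  proof -
    have "A \<subseteq> X" using assms(2) that by blast
    from member_subset_closure_chain[OF that assms(1)[OF that] this, of d]
    show "?levels A \<subseteq> Field ?r" "?levels A \<noteq> {}" by auto
  qed
  show "wo_rel.minim ?r (?levels A) \<in> X \<and> A \<subseteq> closure_chain d \<A> X (wo_rel.minim ?r (?levels A))"
    if "A \<in> \<A>" for A
    using wo_rel.minim_in[OF wo levels[OF that]] by simp
  show "\<not> meets d A (closure_chain d \<A> X y)"
    if A: "A \<in> \<A>" and y: "y \<in> underS ?r (wo_rel.minim ?r (?levels A))" for A y
  proof
    assume "meets d A (closure_chain d \<A> X y)"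
    then have "A \<subseteq> closure_chain d \<A> X y"
      unfolding closure_chain_def by (rule meet_closure_closed[OF A])
    moreover have "y \<in> X" using y card_of_underS_subset[of X] by blast
    ultimately have "(wo_rel.minim ?r (?levels A), y) \<in> ?r"
      using wo_rel.minim_least[OF wo levels(1)[OF A], of y] by blast
    then show False using y wo_rel.ANTISYM[OF wo] unfolding underS_def antisym_def by blast
  qed
qed

lemma exists_cores_large_ground:
  fixes X :: "'a set" and K :: "'k set" and \<A> :: "'a set set"
  assumes K: "infinite K" "|K| <o |X|" and X: "\<Union>\<A> \<subseteq> X"
    and members: "\<And>A. A \<in> \<A> \<Longrightarrow> A \<approx> K" and ad: "almost_disjoint d \<A>"
    and smaller: "\<And>(X' :: 'a set) \<B>. |X'| <o |X| \<Longrightarrow> \<Union>\<B> \<subseteq> X' \<Longrightarrow>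
      (\<And>B. B \<in> \<B> \<Longrightarrow> B \<approx> K) \<Longrightarrow> almost_disjoint d \<B> \<Longrightarrow> \<exists>D. separating_cores \<B> D"
  shows "\<exists>D. separating_cores \<A> D"
proof -
  have infinite: "infinite A" if "A \<in> \<A>" for A using K(1) members[OF that] eqpoll_finite_iff by blast
  obtain lev :: "'a set \<Rightarrow> 'a"
    where lev: "\<And>A. A \<in> \<A> \<Longrightarrow> lev A \<in> X \<and> A \<subseteq> closure_chain d \<A> X (lev A)"
    and below: "\<And>A y. A \<in> \<A> \<Longrightarrow> y \<in> underS (card_of X) (lev A) \<Longrightarrow>
      \<not> meets d A (closure_chain d \<A> X y)"
    by (rule obtain_least_level[OF infinite X]) auto
  have early: "finite (A \<inter> \<Union>(closure_chain d \<A> X ` underS (card_of X) (lev A)))"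
    if A: "A \<in> \<A>" for A
  proof (rule finite_Int_Union_chain)
    show "subset.chain UNIV (closure_chain d \<A> X ` underS (card_of X) (lev A))"
      using card_of_underS_subset[of X "lev A"] by (intro subset_chain_closure_chain) blast
  qed (use below[OF A] in blast)
  interpret levelled_family d \<A> "card_of X" "closure_chain d \<A> X" lev
  proof (rule levelled_family.intro[OF card_of_Well_order ad infinite])
    show "lev A \<in> Field (card_of X)" if "A \<in> \<A>" for A using lev[OF that] by simp
    show "A \<subseteq> closure_chain d \<A> X (lev A)" if "A \<in> \<A>" for A using lev[OF that] by simp
  qed (simp_all add: early)
  show ?thesis
  proof (rule exists_cores_from_levels)
    fix x assume "x \<in> Field (card_of X)"
    then have x: "x \<in> X" by simp
    show "\<exists>C. separating_cores (level x) C"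
    proof (rule smaller[OF card_of_closure_chain[OF K x members ad]])
      show "\<Union>(level x) \<subseteq> closure_chain d \<A> X x" unfolding level_def trim_def using lev by blast
      show "B \<approx> K" if B: "B \<in> level x" for B
      proof -
        obtain A where A: "A \<in> \<A>" "lev A = x" "B = trim x A" using B unfolding level_def by blast
        then have "B \<approx> A" using eqpoll_trim by blast
        then show ?thesis using members[OF A(1)] by (rule eqpoll_trans)
      qed
      show "almost_disjoint d (level x)"
        unfolding level_def trim_def by (rule almost_disjoint_image_subsets[OF ad]) auto
    qed
  qed
qed

section \<open>Induction on the ground set\<close>

lemma card_of_family_ordLeq_Fpow:
  assumes "almost_disjoint d \<B>" and "\<And>B. B \<in> \<B> \<Longrightarrow> infinite B" and "\<Union>\<B> \<subseteq> X"
  shows "|\<B>| \<le>o |Fpow X|"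
proof -
  have "\<B> \<subseteq> {B\<in>\<B>. meets d B X}" using assms(2,3) meets_if_subset by blast
  then show ?thesis using ordLeq_transitive[OF card_of_mono1 card_of_meeting_members[OF assms(1)]] by blast
qed

lemma exists_cores_in_ground:
  fixes K :: "'k set" and X :: "'a set"
  assumes "infinite K"
  shows "\<Union>\<B> \<subseteq> X \<Longrightarrow> (\<And>B. B \<in> \<B> \<Longrightarrow> B \<approx> K) \<Longrightarrow> almost_disjoint d \<B> \<Longrightarrow>
    \<exists>D. separating_cores \<B> D"
proof (induction X arbitrary: \<B> rule: wf_induct_rule[OF wf_inv_image[OF wf_ordLess, of card_of]])
  case (1 X \<B>)
  show ?case
  proof (cases "|K| <o |X|")
    case True
    show ?thesis
    proof (rule exists_cores_large_ground[OF assms(1) True "1.prems"])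
      fix X' :: "'a set" and \<B>'
      assume "|X'| <o |X|" "\<Union>\<B>' \<subseteq> X'" "\<And>B. B \<in> \<B>' \<Longrightarrow> B \<approx> K" "almost_disjoint d \<B>'"
      then show "\<exists>D. separating_cores \<B>' D" using "1.IH"[of X' \<B>'] by simp
    qed
  next
    case False
    then have "|X| \<le>o |K|" by (simp add: not_ordLess_iff_ordLeq)
    have "infinite B" if "B \<in> \<B>" for B using assms "1.prems"(2)[OF that] eqpoll_finite_iff by blast
    then have "|\<B>| \<le>o |Fpow X|" using card_of_family_ordLeq_Fpow "1.prems"(1,3) by blast
    then have "|\<B>| \<le>o |K|"
      using card_of_Fpow_ordLeq[OF assms(1) \<open>|X| \<le>o |K|\<close>] by (rule ordLeq_transitive)
    then show ?thesis by (rule exists_cores_small_family[OF assms(1) _ "1.prems"(2,3)])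
  qed
qed

theorem theorem4p1:
  fixes \<A> :: "'a set set" and L :: "'l set" and K :: "'k set" and d :: nat
  assumes "infinite K" and "K \<lesssim> L" and "is_system \<A> L K d"
  shows "(\<exists>f :: 'a \<Rightarrow> nat. conflict_free f \<A>) \<and>
         (\<exists>f :: 'a \<Rightarrow> nat. \<forall>A\<in>\<A>. finite (UNIV - I_f f (\<Union>\<A>) A))"
proof -
  have "\<And>A. A \<in> \<A> \<Longrightarrow> A \<approx> K" and "almost_disjoint d \<A>"
    using assms(3) unfolding is_system_def almost_disjoint_def by blast+
  then obtain D where "separating_cores \<A> D" using exists_cores_in_ground[OF assms(1) order_refl] by blast
  then obtain f :: "'a \<Rightarrow> nat" where f: "\<forall>A\<in>\<A>. finite (UNIV - I_f f (\<Union>\<A>) A)"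
    using colouring_from_cores by blast
  then have "conflict_free f \<A>"
    unfolding conflict_free_def using infinite_UNIV_nat by (metis Diff_empty)
  with f show ?thesis by blast
qed

end
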